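(* Let $G$ be a cyclic group of order $3$ and $\mathbb{Z}_{(2)} = \{ m/n : m,n\in\mathbb{Z},\ n \text{ odd}\}$. Then the group ring $\mathbb{Z}_{(2)}G$ is strongly clean.
   Context: All rings are associative with identity. An element $x$ of a ring $R$ is strongly clean if $x = e+u$ with $e^2=e$, $u$ a unit, and $eu=ue$; $R$ is strongly clean if every element is. *)

theory Defs
  imports Complex_Main "HOL-Algebra.Ring"
begin

definition strongly_clean_elem :: "('a, 'b) ring_scheme \<Rightarrow> 'a \<Rightarrow> bool" where
  "strongly_clean_elem R x \<longleftrightarrow>
     (\<exists>e\<in>carrier R. \<exists>u\<in>Units R.
        e \<otimes>\<^bsub>R\<^esub> e = e \<and> e \<otimes>\<^bsub>R\<^esub> u = u \<otimes>\<^bsub>R\<^esub> e \<and> x = e \<oplus>\<^bsub>R\<^esub> u)"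

definition strongly_clean :: "('a, 'b) ring_scheme \<Rightarrow> bool" where
  "strongly_clean R \<longleftrightarrow> (\<forall>x\<in>carrier R. strongly_clean_elem R x)"

definition Z2loc :: "rat set" where
  "Z2loc = {of_int m / of_int n | m n. odd n}"

text \<open>The group ring Z_(2) C_3, where C_3 = {1, g, g^2}. An element (a,b,c)
  stands for a + b g + c g^2; multiplication is the group-ring convolution.\<close>
definition C3_mult :: "rat \<times> rat \<times> rat \<Rightarrow> rat \<times> rat \<times> rat \<Rightarrow> rat \<times> rat \<times> rat" where
  "C3_mult x y = (case x of (a0, a1, a2) \<Rightarrow> case y of (b0, b1, b2) \<Rightarrow>
      (a0*b0 + a1*b2 + a2*b1, a0*b1 + a1*b0 + a2*b2, a0*b2 + a1*b1 + a2*b0))"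

definition C3_add :: "rat \<times> rat \<times> rat \<Rightarrow> rat \<times> rat \<times> rat \<Rightarrow> rat \<times> rat \<times> rat" where
  "C3_add x y = (case x of (a0, a1, a2) \<Rightarrow> case y of (b0, b1, b2) \<Rightarrow>
      (a0 + b0, a1 + b1, a2 + b2))"

definition Z2_C3 :: "(rat \<times> rat \<times> rat) ring" where
  "Z2_C3 = \<lparr> carrier = {(a, b, c). a \<in> Z2loc \<and> b \<in> Z2loc \<and> c \<in> Z2loc},
             monoid.mult = C3_mult, one = (1, 0, 0),
             zero = (0, 0, 0), add = C3_add \<rparr>"

end

theory Submission
  imports Defs
begin

(* Every element of Z_(2)C_3 can be written as (a + b g + c g^2)/n with a, b, c
   integers and n odd.  Reducing mod 2 gives F_2 C_3, whose units are exactly 1, g, g^2; lifting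
   this, (a + b g + c g^2)/m (m odd) is a unit as soon as exactly one of a, b, c is odd: its
   norm (a+b+c)(a^2+b^2+c^2-ab-bc-ca) is then odd and the adjugate gives an explicit inverse.
   The ring has the four idempotents 0, 1, e = (1+g+g^2)/3 and 1 - e, all with numerators
   over the odd denominator 3.  Subtracting the right one of them from x makes exactly one
   numerator odd, the choice depending only on how many of a, b, c are odd (0, 1, 2 or 3). *)

definition C3_frac :: "int \<Rightarrow> int \<Rightarrow> int \<Rightarrow> int \<Rightarrow> rat \<times> rat \<times> rat" where
  "C3_frac m a b c = (of_int a / of_int m, of_int b / of_int m, of_int c / of_int m)"

lemma Z2loc_I: "odd (n::int) \<Longrightarrow> (of_int a / of_int n :: rat) \<in> Z2loc"
  unfolding Z2loc_def by blast

lemma C3_frac_carrier: "odd m \<Longrightarrow> C3_frac m a b c \<in> carrier Z2_C3"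
  unfolding C3_frac_def Z2_C3_def by (simp add: Z2loc_I)

lemma carrier_common_denominator:
  assumes "x \<in> carrier Z2_C3"
  obtains n a b c where "odd n" "x = C3_frac n a b c"
proof -
  obtain a1 n1 a2 n2 a3 n3 where x: "x = (of_int a1 / of_int n1, of_int a2 / of_int n2, of_int a3 / of_int n3)"
    and odd: "odd n1" "odd n2" "odd n3"
    using assms unfolding Z2_C3_def Z2loc_def by auto
  have "x = C3_frac (n1*n2*n3) (a1*n2*n3) (a2*n1*n3) (a3*n1*n2)"
    unfolding x C3_frac_def using odd by (auto simp: field_simps)
  then show ?thesis using odd by (intro that) simp_all
qed

text \<open>Exactly one of three integers is odd: the numerator reduces mod 2 to 1, g or g^2.\<close>
definition one_odd :: "int \<Rightarrow> int \<Rightarrow> int \<Rightarrow> bool" where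
  "one_odd a b c \<longleftrightarrow> (odd a \<and> even b \<and> even c) \<or> (even a \<and> odd b \<and> even c) \<or> (even a \<and> even b \<and> odd c)"

lemma one_odd_norm_odd:
  assumes "one_odd a b c"
  shows "odd ((a+b+c) * (a^2 + b^2 + c^2 - a*b - b*c - c*a))"
  using assms unfolding one_odd_def by (auto simp: even_add even_diff even_mult_iff)

text \<open>The unit criterion: the adjugate of (a,b,c) divided by the odd norm is an inverse.\<close>
lemma C3_frac_unit:
  assumes m: "odd m" and one: "one_odd a b c"
  shows "C3_frac m a b c \<in> Units Z2_C3"
proof -
  define D where "D = (a+b+c) * (a^2 + b^2 + c^2 - a*b - b*c - c*a)"
  have D: "odd D" using one_odd_norm_odd[OF one] unfolding D_def .
  have nonzero: "(of_int D::rat) \<noteq> 0" "(of_int m::rat) \<noteq> 0" using D m by auto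
  define y where "y = C3_frac D (m*(a^2-b*c)) (m*(c^2-a*b)) (m*(b^2-a*c))"
  have norm: "(of_int D::rat) = (of_int a + of_int b + of_int c) *
     ((of_int a)^2 + (of_int b)^2 + (of_int c)^2 - of_int a * of_int b - of_int b * of_int c - of_int c * of_int a)"
    unfolding D_def by simp
  have inv_r: "C3_mult (C3_frac m a b c) y = (1,0,0)" and inv_l: "C3_mult y (C3_frac m a b c) = (1,0,0)"
    unfolding C3_mult_def y_def C3_frac_def using nonzero
    by (simp add: field_simps, simp only: norm, simp add: algebra_simps power2_eq_square)+
  have "y \<in> carrier Z2_C3" unfolding y_def using C3_frac_carrier[OF D] .
  then show ?thesis
    unfolding Units_def using C3_frac_carrier[OF m] inv_r inv_l
    by (intro CollectI conjI bexI[of _ y]) (simp_all add: Z2_C3_def)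
qed

lemma C3_mult_commute: "C3_mult x y = C3_mult y x"
  unfolding C3_mult_def by (auto split: prod.splits simp: algebra_simps)

text \<open>Since the ring is commutative, an idempotent plus a unit is strongly clean.\<close>
lemma strongly_clean_elemI:
  assumes "e \<in> carrier Z2_C3" "u \<in> Units Z2_C3" "C3_mult e e = e" "x = C3_add e u"
  shows "strongly_clean_elem Z2_C3 x"
  unfolding strongly_clean_elem_def using assms C3_mult_commute by (auto simp: Z2_C3_def)

lemma strongly_clean_by_shift:
  assumes n: "odd n"
    and idem: "C3_mult (C3_frac 3 p q r) (C3_frac 3 p q r) = C3_frac 3 p q r"
    and one: "one_odd (3*a - n*p) (3*b - n*q) (3*c - n*r)"
  shows "strongly_clean_elem Z2_C3 (C3_frac n a b c)"
proof (rule strongly_clean_elemI[OF C3_frac_carrier _ idem])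
  show "C3_frac (3*n) (3*a - n*p) (3*b - n*q) (3*c - n*r) \<in> Units Z2_C3"
    using C3_frac_unit n one by simp
  have "(of_int n::rat) \<noteq> 0" using n by auto
  then show "C3_frac n a b c = C3_add (C3_frac 3 p q r) (C3_frac (3*n) (3*a - n*p) (3*b - n*q) (3*c - n*r))"
    unfolding C3_frac_def C3_add_def by (simp add: field_simps)
qed simp

lemma idempotents:
  "C3_mult (C3_frac 3 0 0 0) (C3_frac 3 0 0 0) = C3_frac 3 0 0 0"
  "C3_mult (C3_frac 3 3 0 0) (C3_frac 3 3 0 0) = C3_frac 3 3 0 0"
  "C3_mult (C3_frac 3 1 1 1) (C3_frac 3 1 1 1) = C3_frac 3 1 1 1"
  "C3_mult (C3_frac 3 2 (-1) (-1)) (C3_frac 3 2 (-1) (-1)) = C3_frac 3 2 (-1) (-1)"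
  unfolding C3_mult_def C3_frac_def by simp_all

theorem corollary1p14:
  shows "strongly_clean Z2_C3"
  unfolding strongly_clean_def
proof
  fix x assume "x \<in> carrier Z2_C3"
  then obtain n a b c where n: "odd n" and x: "x = C3_frac n a b c"
    by (rule carrier_common_denominator)
  have shift: "strongly_clean_elem Z2_C3 x"
    if "C3_mult (C3_frac 3 p q r) (C3_frac 3 p q r) = C3_frac 3 p q r"
       "one_odd (3*a - n*p) (3*b - n*q) (3*c - n*r)" for p q r
    using strongly_clean_by_shift[OF n that] x by simp
  text \<open>The idempotent is chosen by the number of odd numerators: 1, 0, 2 or 3 of them.\<close>
  consider "one_odd a b c" | "even a \<and> even b \<and> even c"
    | "one_odd (a+1) (b+1) (c+1)" | "odd a \<and> odd b \<and> odd c"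
    unfolding one_odd_def by auto
  then show "strongly_clean_elem Z2_C3 x"
  proof cases
    case 1 then show ?thesis using shift[OF idempotents(1)] by (simp add: one_odd_def)
  next
    case 2 then show ?thesis using shift[OF idempotents(2)] n by (simp add: one_odd_def)
  next
    case 3 then show ?thesis using shift[OF idempotents(3)] n by (auto simp: one_odd_def)
  next
    case 4 then show ?thesis using shift[OF idempotents(4)] n by (simp add: one_odd_def)
  qed
qed

end
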